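(* Let $Q$ be a symmetric Leibniz algebra and $L$ a dense subalgebra of $Q$, and suppose $Q$ is a multiplicatively semiprime algebra of quotients of $L$. Then for every essential ideal $I$ of $L$, the extension $I\subseteq Q$ is dense.
   Context: A symmetric Leibniz algebra satisfies both $[x,[y,z]]=[[x,y],z]-[[x,z],y]$ and $[x,[y,z]]=[[x,y],z]+[y,[x,z]]$. For $x\in Q$, $R_x(u)=[u,x]$, $L_x(u)=[x,u]$. $M(Q)$ is the associative subalgebra of $\mathrm{End}(Q)$ generated by the identity and all $R_x,L_x$ ($x\in Q$). For a subalgebra $K$ of $Q$, $K^{ann}=\{\mu\in M(Q):\mu(x)=0\ \forall x\in K\}$, and $K$ is dense in $Q$ (the extension $K\subseteq Q$ is dense) if $K^{ann}=\{0\}$. A Leibniz algebra is semiprime if $[I,I]\ne\{0\}$ for every nonzero ideal $I$ (ideals: subspaces $I$ with $[I,L]\subseteq I$, $[L,I]\subseteq I$); an associative algebra is semiprime if it has no nonzero two-sided ideal with zero square. $Q$ is multiplicatively semiprime if $Q$ and $M(Q)$ are both semiprime. An ideal $I$ of $L$ is essential if $I\cap J\ne\{0\}$ for each nonzero ideal $J$ of $L$. With $\mathscr{A}_Q(L)$ the associative algebra generated by $R_x,L_y$ ($x,y\in L$) acting on $Q$, ${}_L(q)=\mathbb{F}q+\{\sum\xi_i(q):\xi_i\in\mathscr{A}_Q(L)\}$ and $(L:q)=\{x\in L:[x,{}_L(q)]\subseteq L,[{}_L(q),x]\subseteq L\}$; $Q$ is an algebra of quotients of $L$ if for all $p,q\in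 Q$, $p\ne0$, there is $x\in(L:q)$ with $[x,p]\ne0$ or $y\in(L:q)$ with $[p,y]\ne0$. *)

theory Defs
  imports Complex_Main
begin

text \<open>A Leibniz algebra over a field 'k is modelled as the whole type 'v, which is a
vector space via scale, together with a bilinear bracket br.  Subalgebras,
ideals etc. are subsets of 'v.\<close>

definition bilinear_bracket :: "('k::field \<Rightarrow> 'v::ab_group_add \<Rightarrow> 'v) \<Rightarrow> ('v \<Rightarrow> 'v \<Rightarrow> 'v) \<Rightarrow> bool" where
  "bilinear_bracket scale br \<longleftrightarrow>
     (\<forall>x. Vector_Spaces.linear scale scale (br x)) \<and>
     (\<forall>y. Vector_Spaces.linear scale scale (\<lambda>x. br x y))"

definition symmetric_leibniz :: "('k::field \<Rightarrow> 'v::ab_group_add \<Rightarrow> 'v) \<Rightarrow> ('v \<Rightarrow> 'v \<Rightarrow> 'v) \<Rightarrow> bool" where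
  "symmetric_leibniz scale br \<longleftrightarrow>
     vector_space scale \<and> bilinear_bracket scale br \<and>
     (\<forall>x y z. br x (br y z) = br (br x y) z - br (br x z) y) \<and>
     (\<forall>x y z. br x (br y z) = br (br x y) z + br y (br x z))"

definition subalgebra :: "('k::field \<Rightarrow> 'v::ab_group_add \<Rightarrow> 'v) \<Rightarrow> ('v \<Rightarrow> 'v \<Rightarrow> 'v) \<Rightarrow> 'v set \<Rightarrow> bool" where
  "subalgebra scale br L \<longleftrightarrow> module.subspace scale L \<and> (\<forall>x\<in>L. \<forall>y\<in>L. br x y \<in> L)"

definition leib_ideal :: "('k::field \<Rightarrow> 'v::ab_group_add \<Rightarrow> 'v) \<Rightarrow> ('v \<Rightarrow> 'v \<Rightarrow> 'v) \<Rightarrow> 'v set \<Rightarrow> 'v set \<Rightarrow> bool" where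
  "leib_ideal scale br L I \<longleftrightarrow> module.subspace scale I \<and> I \<subseteq> L \<and>
     (\<forall>x\<in>I. \<forall>y\<in>L. br x y \<in> I \<and> br y x \<in> I)"

definition leib_semiprime :: "('k::field \<Rightarrow> 'v::ab_group_add \<Rightarrow> 'v) \<Rightarrow> ('v \<Rightarrow> 'v \<Rightarrow> 'v) \<Rightarrow> 'v set \<Rightarrow> bool" where
  "leib_semiprime scale br L \<longleftrightarrow>
     (\<forall>I. leib_ideal scale br L I \<and> I \<noteq> {0} \<longrightarrow> (\<exists>x\<in>I. \<exists>y\<in>I. br x y \<noteq> 0))"

definition essential_ideal :: "('k::field \<Rightarrow> 'v::ab_group_add \<Rightarrow> 'v) \<Rightarrow> ('v \<Rightarrow> 'v \<Rightarrow> 'v) \<Rightarrow> 'v set \<Rightarrow> 'v set \<Rightarrow> bool" where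
  "essential_ideal scale br L I \<longleftrightarrow> leib_ideal scale br L I \<and>
     (\<forall>J. leib_ideal scale br L J \<and> J \<noteq> {0} \<longrightarrow> I \<inter> J \<noteq> {0})"

inductive_set mult_alg :: "('k::field \<Rightarrow> 'v::ab_group_add \<Rightarrow> 'v) \<Rightarrow> ('v \<Rightarrow> 'v \<Rightarrow> 'v) \<Rightarrow> ('v \<Rightarrow> 'v) set"
  for scale br where
  ma_id: "id \<in> mult_alg scale br"
| ma_R: "(\<lambda>u. br u x) \<in> mult_alg scale br"
| ma_L: "(\<lambda>u. br x u) \<in> mult_alg scale br"
| ma_zero: "(\<lambda>u. 0) \<in> mult_alg scale br"
| ma_add: "f \<in> mult_alg scale br \<Longrightarrow> g \<in> mult_alg scale br \<Longrightarrow> (\<lambda>u. f u + g u) \<in> mult_alg scale br"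
| ma_scale: "f \<in> mult_alg scale br \<Longrightarrow> (\<lambda>u. scale c (f u)) \<in> mult_alg scale br"
| ma_comp: "f \<in> mult_alg scale br \<Longrightarrow> g \<in> mult_alg scale br \<Longrightarrow> f \<circ> g \<in> mult_alg scale br"

inductive_set assoc_alg :: "('k::field \<Rightarrow> 'v::ab_group_add \<Rightarrow> 'v) \<Rightarrow> ('v \<Rightarrow> 'v \<Rightarrow> 'v) \<Rightarrow> 'v set \<Rightarrow> ('v \<Rightarrow> 'v) set"
  for scale br L where
  aa_R: "x \<in> L \<Longrightarrow> (\<lambda>u. br u x) \<in> assoc_alg scale br L"
| aa_L: "x \<in> L \<Longrightarrow> (\<lambda>u. br x u) \<in> assoc_alg scale br L"
| aa_zero: "(\<lambda>u. 0) \<in> assoc_alg scale br L"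
| aa_add: "f \<in> assoc_alg scale br L \<Longrightarrow> g \<in> assoc_alg scale br L \<Longrightarrow> (\<lambda>u. f u + g u) \<in> assoc_alg scale br L"
| aa_scale: "f \<in> assoc_alg scale br L \<Longrightarrow> (\<lambda>u. scale c (f u)) \<in> assoc_alg scale br L"
| aa_comp: "f \<in> assoc_alg scale br L \<Longrightarrow> g \<in> assoc_alg scale br L \<Longrightarrow> f \<circ> g \<in> assoc_alg scale br L"

definition assoc_ideal :: "('k::field \<Rightarrow> 'v::ab_group_add \<Rightarrow> 'v) \<Rightarrow> ('v \<Rightarrow> 'v) set \<Rightarrow> ('v \<Rightarrow> 'v) set \<Rightarrow> bool" where
  "assoc_ideal scale A J \<longleftrightarrow> J \<subseteq> A \<and> (\<lambda>u. 0) \<in> J \<and>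
     (\<forall>f\<in>J. \<forall>g\<in>J. (\<lambda>u. f u + g u) \<in> J) \<and>
     (\<forall>f\<in>J. \<forall>c. (\<lambda>u. scale c (f u)) \<in> J) \<and>
     (\<forall>f\<in>J. \<forall>m\<in>A. m \<circ> f \<in> J \<and> f \<circ> m \<in> J)"

definition assoc_semiprime :: "('k::field \<Rightarrow> 'v::ab_group_add \<Rightarrow> 'v) \<Rightarrow> ('v \<Rightarrow> 'v) set \<Rightarrow> bool" where
  "assoc_semiprime scale A \<longleftrightarrow>
     (\<forall>J. assoc_ideal scale A J \<and> (\<forall>f\<in>J. \<forall>g\<in>J. f \<circ> g = (\<lambda>u. 0)) \<longrightarrow> J = {\<lambda>u. 0})"

definition mult_semiprime :: "('k::field \<Rightarrow> 'v::ab_group_add \<Rightarrow> 'v) \<Rightarrow> ('v \<Rightarrow> 'v \<Rightarrow> 'v) \<Rightarrow> bool" where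
  "mult_semiprime scale br \<longleftrightarrow> leib_semiprime scale br UNIV \<and> assoc_semiprime scale (mult_alg scale br)"

definition annih :: "('k::field \<Rightarrow> 'v::ab_group_add \<Rightarrow> 'v) \<Rightarrow> ('v \<Rightarrow> 'v \<Rightarrow> 'v) \<Rightarrow> 'v set \<Rightarrow> ('v \<Rightarrow> 'v) set" where
  "annih scale br K = {\<mu> \<in> mult_alg scale br. \<forall>x\<in>K. \<mu> x = 0}"

definition dense_in :: "('k::field \<Rightarrow> 'v::ab_group_add \<Rightarrow> 'v) \<Rightarrow> ('v \<Rightarrow> 'v \<Rightarrow> 'v) \<Rightarrow> 'v set \<Rightarrow> bool" where
  "dense_in scale br K \<longleftrightarrow> annih scale br K = {\<lambda>u. 0}"

definition gen_by :: "('k::field \<Rightarrow> 'v::ab_group_add \<Rightarrow> 'v) \<Rightarrow> ('v \<Rightarrow> 'v \<Rightarrow> 'v) \<Rightarrow> 'v set \<Rightarrow> 'v \<Rightarrow> 'v set" where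
  "gen_by scale br L q = {scale a q + \<xi> q | a \<xi>. \<xi> \<in> assoc_alg scale br L}"

definition colon :: "('k::field \<Rightarrow> 'v::ab_group_add \<Rightarrow> 'v) \<Rightarrow> ('v \<Rightarrow> 'v \<Rightarrow> 'v) \<Rightarrow> 'v set \<Rightarrow> 'v \<Rightarrow> 'v set" where
  "colon scale br L q = {x \<in> L. \<forall>u\<in>gen_by scale br L q. br x u \<in> L \<and> br u x \<in> L}"

definition algebra_of_quotients :: "('k::field \<Rightarrow> 'v::ab_group_add \<Rightarrow> 'v) \<Rightarrow> ('v \<Rightarrow> 'v \<Rightarrow> 'v) \<Rightarrow> 'v set \<Rightarrow> bool" where
  "algebra_of_quotients scale br L \<longleftrightarrow>
     (\<forall>p q. p \<noteq> 0 \<longrightarrow> (\<exists>x\<in>colon scale br L q. br x p \<noteq> 0 \<or> br p x \<noteq> 0))"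

end

theory Submission
  imports Defs
begin

(* Write N for the annihilator of I in M(Q). Since [I, L] and [L, I] lie in I, density of L
   gives \<nu> L\<^sub>i = \<nu> R\<^sub>i = 0 for \<nu> \<in> N and i \<in> I; hence N is a two-sided ideal of M(Q).
   The elements h \<in> N with N h = 0 form an ideal of square zero, which vanishes because M(Q) is
   semiprime. Applied to L\<^sub>i \<mu> and R\<^sub>i \<mu> for \<mu> \<in> N, this shows that every \<mu> \<in> N maps Q into
   the two-sided annihilator C of I. Applied to L\<^sub>a and R\<^sub>a, it shows that every a \<in> I \<inter> C
   annihilates Q, so I \<inter> C = 0 as Q is an algebra of quotients of L. The symmetric Leibniz
   identities make L \<inter> C an ideal of L, so L \<inter> C = 0 by essentiality of I; finally C = 0, since
   any nonzero p \<in> C has a nonzero product with some x \<in> L that lies in L \<inter> C. *)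

definition leib_annihilator :: "('v \<Rightarrow> 'v \<Rightarrow> 'v::zero) \<Rightarrow> 'v set \<Rightarrow> 'v set" where
  "leib_annihilator br K = {p. \<forall>i\<in>K. br i p = 0 \<and> br p i = 0}"

context vector_space
begin

lemma assoc_semiprime_ideal_inter_right_annihilator_eq_zero:
  assumes semiprime: "assoc_semiprime scale A" and ideal: "assoc_ideal scale A N"
    and lin: "\<And>\<nu>. \<nu> \<in> N \<Longrightarrow> Vector_Spaces.linear scale scale \<nu>"
    and "h \<in> N" and "\<And>\<nu>. \<nu> \<in> N \<Longrightarrow> \<nu> \<circ> h = (\<lambda>u. 0)"
  shows "h = (\<lambda>u. 0)"
proof -
  define J where "J = {h \<in> N. \<forall>\<nu>\<in>N. \<nu> \<circ> h = (\<lambda>u. 0)}"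
  have N: "N \<subseteq> A" "(\<lambda>u. 0) \<in> N" "\<And>f g. f \<in> N \<Longrightarrow> g \<in> N \<Longrightarrow> (\<lambda>u. f u + g u) \<in> N"
    "\<And>f c. f \<in> N \<Longrightarrow> (\<lambda>u. c *s f u) \<in> N"
    "\<And>f m. f \<in> N \<Longrightarrow> m \<in> A \<Longrightarrow> m \<circ> f \<in> N \<and> f \<circ> m \<in> N"
    using ideal unfolding assoc_ideal_def by blast+
  have add: "\<nu> (x + y) = \<nu> x + \<nu> y" and hom: "\<nu> (c *s x) = c *s \<nu> x" and zero: "\<nu> 0 = 0"
    if "\<nu> \<in> N" for \<nu> x y c
    using lin[OF that] module_hom.zero[of scale scale \<nu>]
    by (simp_all add: Vector_Spaces.linear_iff module_hom_iff_linear)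
  have "assoc_ideal scale A J"
    unfolding assoc_ideal_def
  proof (intro conjI ballI allI)
    show "J \<subseteq> A" "(\<lambda>u. 0) \<in> J"
      using N(1,2) zero by (auto simp: J_def)
    show "(\<lambda>u. f u + g u) \<in> J" if "f \<in> J" "g \<in> J" for f g
      using that N(3) by (auto simp: J_def fun_eq_iff add)
    show "(\<lambda>u. c *s f u) \<in> J" if "f \<in> J" for f c
      using that N(4) by (auto simp: J_def fun_eq_iff hom)
    show "m \<circ> f \<in> J" "f \<circ> m \<in> J" if "f \<in> J" "m \<in> A" for f m
      using that N(5) by (auto simp: J_def comp_assoc[symmetric] simp del: comp_apply) (auto simp: fun_eq_iff)
  qed
  moreover have "f \<circ> g = (\<lambda>u. 0)" if "f \<in> J" "g \<in> J" for f g
    using that by (simp add: J_def)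
  ultimately have "J = {\<lambda>u. 0}"
    using semiprime unfolding assoc_semiprime_def by blast
  then show ?thesis
    using assms(4,5) by (auto simp: J_def)
qed

end

locale bilinear_algebra = vector_space scale
  for scale :: "'k::field \<Rightarrow> 'v::ab_group_add \<Rightarrow> 'v" (infixr \<open>*s\<close> 75) +
  fixes br :: "'v \<Rightarrow> 'v \<Rightarrow> 'v"
  assumes bilinear: "bilinear_bracket scale br"
begin

lemma bracket_left_linear: "br x (y + z) = br x y + br x z" "br x (c *s y) = c *s br x y"
  and bracket_right_linear: "br (y + z) x = br y x + br z x" "br (c *s y) x = c *s br y x"
  using bilinear by (simp_all add: bilinear_bracket_def Vector_Spaces.linear_iff)

lemma bracket_zero [simp]: "br x 0 = 0" "br 0 x = 0"
  using bracket_left_linear(2)[of x 0 0] bracket_right_linear(2)[of 0 0 x] by simp_all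

lemma subspace_leib_annihilator: "subspace (leib_annihilator br K)"
  by (simp add: subspace_def leib_annihilator_def bracket_left_linear bracket_right_linear)

lemma linear_mult_alg: "f \<in> mult_alg scale br \<Longrightarrow> Vector_Spaces.linear scale scale f"
proof (induction rule: mult_alg.induct)
  case ma_id
  show ?case by (fact linear_id)
next
  case (ma_R x)
  show ?case using bilinear by (simp add: bilinear_bracket_def)
next
  case (ma_L x)
  show ?case using bilinear by (simp add: bilinear_bracket_def)
next
  case ma_zero
  show ?case by (simp add: Vector_Spaces.linear_iff vector_space_axioms)
next
  case (ma_add f g)
  then show ?case by (simp add: Vector_Spaces.linear_iff algebra_simps)
next
  case (ma_scale f c)
  then show ?case by (simp add: Vector_Spaces.linear_iff scale_right_distrib scale_left_commute)
next
  case (ma_comp f g)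
  then show ?case using Vector_Spaces.linear_compose by blast
qed

lemma mult_alg_add: "f \<in> mult_alg scale br \<Longrightarrow> f (x + y) = f x + f y"
  and mult_alg_scale: "f \<in> mult_alg scale br \<Longrightarrow> f (c *s x) = c *s f x"
  and mult_alg_zero: "f \<in> mult_alg scale br \<Longrightarrow> f 0 = 0"
  using module_hom.add module_hom.scale module_hom.zero
    linear_mult_alg[THEN module_hom_iff_linear[THEN iffD2]]
  by metis+

lemma annih_compI:
  assumes "\<mu> \<in> mult_alg scale br" and "m \<in> mult_alg scale br" and "\<And>x. x \<in> K \<Longrightarrow> \<mu> (m x) = 0"
  shows "\<mu> \<circ> m \<in> annih scale br K"
  using assms by (simp add: annih_def mult_alg.ma_comp)

lemma annih_comp_left:
  assumes "m \<in> mult_alg scale br" and "\<nu> \<in> annih scale br K"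
  shows "m \<circ> \<nu> \<in> annih scale br K"
  using assms by (intro annih_compI) (simp_all add: annih_def mult_alg_zero)

lemma algebra_of_quotients_obtain_bracket:
  assumes "algebra_of_quotients scale br L" and "p \<noteq> 0"
  obtains x where "x \<in> L" and "br x p \<in> L" and "br p x \<in> L" and "br x p \<noteq> 0 \<or> br p x \<noteq> 0"
proof -
  have "p \<in> gen_by scale br L p"
    unfolding gen_by_def by (auto intro!: exI[of _ 1] exI[of _ "\<lambda>u. 0"] assoc_alg.intros)
  with assms that show thesis
    unfolding algebra_of_quotients_def colon_def by blast
qed

context
  fixes L I :: "'v set"
  assumes dense: "dense_in scale br L" and ideal: "leib_ideal scale br L I"
begin

lemma annih_comp_bracket_eq_zero:
  assumes "\<nu> \<in> annih scale br I" and "i \<in> I"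
  shows "\<nu> \<circ> br i = (\<lambda>u. 0)" and "\<nu> \<circ> (\<lambda>u. br u i) = (\<lambda>u. 0)"
proof -
  have "br i x \<in> I" "br x i \<in> I" if "x \<in> L" for x
    using ideal \<open>i \<in> I\<close> that by (simp_all add: leib_ideal_def)
  then have "\<nu> \<circ> br i \<in> annih scale br L" "\<nu> \<circ> (\<lambda>u. br u i) \<in> annih scale br L"
    using assms(1) by (auto simp: annih_def intro: mult_alg.intros)
  then show "\<nu> \<circ> br i = (\<lambda>u. 0)" "\<nu> \<circ> (\<lambda>u. br u i) = (\<lambda>u. 0)"
    using dense by (simp_all add: dense_in_def)
qed

lemma annih_comp_right:
  assumes "m \<in> mult_alg scale br" and "\<nu> \<in> annih scale br I"
  shows "\<nu> \<circ> m \<in> annih scale br I"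
  using assms
proof (induction arbitrary: \<nu> rule: mult_alg.induct)
  case ma_id
  then show ?case by simp
next
  case (ma_R x)
  have "\<nu> (br i x) = 0" if "i \<in> I" for i
    using annih_comp_bracket_eq_zero(1)[OF ma_R that] by (simp add: fun_eq_iff)
  with ma_R show ?case by (intro annih_compI) (simp_all add: annih_def mult_alg.intros)
next
  case (ma_L x)
  have "\<nu> (br x i) = 0" if "i \<in> I" for i
    using annih_comp_bracket_eq_zero(2)[OF ma_L that] by (simp add: fun_eq_iff)
  with ma_L show ?case by (intro annih_compI) (simp_all add: annih_def mult_alg.intros)
next
  case ma_zero
  then show ?case by (simp add: annih_def mult_alg_zero mult_alg.intros)
next
  case (ma_add f g)
  have \<nu>: "\<nu> \<in> mult_alg scale br" using ma_add.prems by (simp add: annih_def)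
  show ?case
  proof (rule annih_compI[OF \<nu> mult_alg.ma_add[OF ma_add.hyps]])
    fix i assume "i \<in> I"
    then have "\<nu> (f i) = 0" "\<nu> (g i) = 0"
      using ma_add.IH ma_add.prems by (auto simp: annih_def)
    then show "\<nu> (f i + g i) = 0" by (simp add: mult_alg_add[OF \<nu>])
  qed
next
  case (ma_scale f c)
  have \<nu>: "\<nu> \<in> mult_alg scale br" using ma_scale.prems by (simp add: annih_def)
  show ?case
  proof (rule annih_compI[OF \<nu> mult_alg.ma_scale[OF ma_scale.hyps]])
    fix i assume "i \<in> I"
    then have "\<nu> (f i) = 0"
      using ma_scale.IH ma_scale.prems by (auto simp: annih_def)
    then show "\<nu> (c *s f i) = 0" by (simp add: mult_alg_scale[OF \<nu>])
  qed
next
  case (ma_comp f g)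
  then show ?case by (simp add: comp_assoc[symmetric] del: comp_apply)
qed

lemma assoc_ideal_annih: "assoc_ideal scale (mult_alg scale br) (annih scale br I)"
  unfolding assoc_ideal_def
proof (intro conjI ballI allI)
  show "annih scale br I \<subseteq> mult_alg scale br" "(\<lambda>u. 0) \<in> annih scale br I"
    by (auto simp: annih_def mult_alg.intros)
  show "(\<lambda>u. f u + g u) \<in> annih scale br I" if "f \<in> annih scale br I" "g \<in> annih scale br I" for f g
    using that by (simp add: annih_def mult_alg.intros)
  show "(\<lambda>u. c *s f u) \<in> annih scale br I" if "f \<in> annih scale br I" for f c
    using that by (simp add: annih_def mult_alg.intros)
  show "m \<circ> \<nu> \<in> annih scale br I" "\<nu> \<circ> m \<in> annih scale br I"
    if "\<nu> \<in> annih scale br I" "m \<in> mult_alg scale br" for \<nu> m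
    using that by (simp_all add: annih_comp_left annih_comp_right)
qed

context
  assumes semiprime: "assoc_semiprime scale (mult_alg scale br)"
begin

lemma annih_eq_zero_if_annih_comp_eq_zero:
  assumes "h \<in> annih scale br I" and "\<And>\<nu>. \<nu> \<in> annih scale br I \<Longrightarrow> \<nu> \<circ> h = (\<lambda>u. 0)"
  shows "h = (\<lambda>u. 0)"
  using assoc_semiprime_ideal_inter_right_annihilator_eq_zero[OF semiprime assoc_ideal_annih _ assms]
  by (simp add: annih_def linear_mult_alg)

lemma annih_apply_in_leib_annihilator:
  assumes "\<mu> \<in> annih scale br I"
  shows "\<mu> q \<in> leib_annihilator br I"
proof -
  have "br i \<circ> \<mu> = (\<lambda>u. 0)" "(\<lambda>u. br u i) \<circ> \<mu> = (\<lambda>u. 0)" if "i \<in> I" for i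
  proof (rule_tac [!] annih_eq_zero_if_annih_comp_eq_zero)
    show "br i \<circ> \<mu> \<in> annih scale br I" "(\<lambda>u. br u i) \<circ> \<mu> \<in> annih scale br I"
      using assms by (simp_all add: annih_comp_left mult_alg.intros)
    show "\<nu> \<circ> (br i \<circ> \<mu>) = (\<lambda>u. 0)" "\<nu> \<circ> ((\<lambda>u. br u i) \<circ> \<mu>) = (\<lambda>u. 0)"
      if "\<nu> \<in> annih scale br I" for \<nu>
      using annih_comp_bracket_eq_zero[OF that \<open>i \<in> I\<close>] by (simp_all add: fun_eq_iff)
  qed
  then show ?thesis
    by (simp add: leib_annihilator_def fun_eq_iff)
qed

lemma ideal_inter_leib_annihilator_eq_zero:
  assumes "algebra_of_quotients scale br L"
  shows "I \<inter> leib_annihilator br I = {0}"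
proof -
  have "a = 0" if "a \<in> I" and a: "a \<in> leib_annihilator br I" for a
  proof (rule ccontr)
    have "br a \<in> annih scale br I" "(\<lambda>u. br u a) \<in> annih scale br I"
      using a by (auto simp: annih_def leib_annihilator_def mult_alg.intros)
    then have "br a = (\<lambda>u. 0)" "(\<lambda>u. br u a) = (\<lambda>u. 0)"
      using annih_comp_bracket_eq_zero \<open>a \<in> I\<close> by (blast intro: annih_eq_zero_if_annih_comp_eq_zero)+
    moreover assume "a \<noteq> 0"
    ultimately show False
      using algebra_of_quotients_obtain_bracket[OF assms] by metis
  qed
  moreover have "0 \<in> I"
    using ideal subspace_0 by (simp add: leib_ideal_def)
  ultimately show ?thesis
    by (auto simp: leib_annihilator_def)
qed

end

end

end

locale symmetric_leibniz_algebra = bilinear_algebra +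
  assumes leibniz_right: "br x (br y z) = br (br x y) z - br (br x z) y"
    and leibniz_left: "br x (br y z) = br (br x y) z + br y (br x z)"
begin

lemma leib_annihilator_bracket_closed:
  assumes ideal: "leib_ideal scale br L I" and p: "p \<in> leib_annihilator br I" and "x \<in> L"
  shows "br x p \<in> leib_annihilator br I" and "br p x \<in> leib_annihilator br I"
proof -
  have "br i (br x p) = 0 \<and> br (br x p) i = 0 \<and> br i (br p x) = 0 \<and> br (br p x) i = 0"
    if "i \<in> I" for i
  proof -
    have "br i x \<in> I" "br x i \<in> I"
      using ideal \<open>i \<in> I\<close> \<open>x \<in> L\<close> by (simp_all add: leib_ideal_def)
    with p \<open>i \<in> I\<close> have "br i p = 0" "br p i = 0" "br (br i x) p = 0" "br p (br i x) = 0"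
      "br (br x i) p = 0" "br p (br x i) = 0"
      by (simp_all add: leib_annihilator_def)
    then show ?thesis
      using leibniz_left[of i x p] leibniz_right[of x p i] leibniz_left[of i p x] leibniz_right[of p x i]
      by (simp add: algebra_simps)
  qed
  then show "br x p \<in> leib_annihilator br I" "br p x \<in> leib_annihilator br I"
    by (simp_all add: leib_annihilator_def)
qed

lemma leib_ideal_inter_leib_annihilator:
  assumes "subalgebra scale br L" and "leib_ideal scale br L I"
  shows "leib_ideal scale br L (L \<inter> leib_annihilator br I)"
  using assms subspace_inter[OF _ subspace_leib_annihilator] leib_annihilator_bracket_closed
  by (auto simp: leib_ideal_def subalgebra_def)

lemma leib_annihilator_eq_zero:
  assumes "subalgebra scale br L" and "algebra_of_quotients scale br L"
    and "essential_ideal scale br L I" and "I \<inter> leib_annihilator br I = {0}"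
  shows "leib_annihilator br I = {0}"
proof -
  have ideal: "leib_ideal scale br L I"
    using assms(3) by (simp add: essential_ideal_def)
  have "I \<inter> (L \<inter> leib_annihilator br I) = {0}"
    using assms(4) ideal subspace_0[OF subspace_leib_annihilator] by (auto simp: leib_ideal_def)
  then have L_inter: "L \<inter> leib_annihilator br I = {0}"
    using assms(3) leib_ideal_inter_leib_annihilator[OF assms(1) ideal]
    by (auto simp: essential_ideal_def)
  have "p = 0" if "p \<in> leib_annihilator br I" for p
  proof (rule ccontr)
    assume "p \<noteq> 0"
    then obtain x where "x \<in> L" "br x p \<in> L" "br p x \<in> L" "br x p \<noteq> 0 \<or> br p x \<noteq> 0"
      using algebra_of_quotients_obtain_bracket[OF assms(2)] by blast
    with L_inter leib_annihilator_bracket_closed[OF ideal that] show False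
      by blast
  qed
  then show ?thesis
    using subspace_0[OF subspace_leib_annihilator] by blast
qed

end

lemma symmetric_leibniz_iff: "symmetric_leibniz scale br \<longleftrightarrow> symmetric_leibniz_algebra scale br"
  by (auto simp: symmetric_leibniz_def symmetric_leibniz_algebra_def symmetric_leibniz_algebra_axioms_def
      bilinear_algebra_def bilinear_algebra_axioms_def)

theorem proposition6p5:
  fixes scale :: "'k::field \<Rightarrow> 'v::ab_group_add \<Rightarrow> 'v"
    and br :: "'v \<Rightarrow> 'v \<Rightarrow> 'v"
    and L I :: "'v set"
  assumes "symmetric_leibniz scale br"
    and "subalgebra scale br L"
    and "dense_in scale br L"
    and "mult_semiprime scale br"
    and "algebra_of_quotients scale br L"
    and "essential_ideal scale br L I"
  shows "dense_in scale br I"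
proof -
  interpret symmetric_leibniz_algebra scale br
    using assms(1) symmetric_leibniz_iff by blast
  have ideal: "leib_ideal scale br L I"
    using assms(6) by (simp add: essential_ideal_def)
  have semiprime: "assoc_semiprime scale (mult_alg scale br)"
    using assms(4) by (simp add: mult_semiprime_def)
  have "leib_annihilator br I = {0}"
    using leib_annihilator_eq_zero[OF assms(2,5,6)]
      ideal_inter_leib_annihilator_eq_zero[OF assms(3) ideal semiprime assms(5)] by simp
  then have "\<mu> = (\<lambda>u. 0)" if "\<mu> \<in> annih scale br I" for \<mu>
    using annih_apply_in_leib_annihilator[OF assms(3) ideal semiprime that] by (simp add: fun_eq_iff)
  moreover have "(\<lambda>u. 0) \<in> annih scale br I"
    by (simp add: annih_def mult_alg.intros)
  ultimately show ?thesis
    unfolding dense_in_def by blast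
qed

end
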